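(* Let $\alpha\in\mathbb{C}$ with $\Re(\alpha)>-1/2$. Then for every $n\in\mathbb{N}_0$, $$(2\alpha+1)\,p_n(x;\alpha+1)=-x\,p_n''(x;\alpha)+(2x-1-2\alpha)\,p_n'(x;\alpha)+(1+2\alpha)\,p_n(x;\alpha).$$
   Context: Let $\mathcal{A}$ be the differential operator $\mathcal{A}f(x)=-x^2f''(x)-xf'(x)+x^2f(x)$ on functions of $x>0$, with iterates $\mathcal{A}^n$ ($\mathcal{A}^0$ = identity). For $\alpha\in\mathbb{C}$, $n\in\mathbb{N}_0$, $p_n(x;\alpha)=(-1)^n e^{x}x^{-\alpha}\,\mathcal{A}^n\big(e^{-x}x^{\alpha}\big)$; for $\Re(\alpha)>-1/2$ these are polynomials in $x$ of degree $n$. Primes denote derivatives in $x$. *)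

theory Defs
  imports "HOL-Analysis.Analysis"
begin

definition xderiv :: "(real \<Rightarrow> complex) \<Rightarrow> real \<Rightarrow> complex" where
  "xderiv f x = vector_derivative f (at x)"

definition opA :: "(real \<Rightarrow> complex) \<Rightarrow> real \<Rightarrow> complex" where
  "opA f x = - ((complex_of_real x)^2 * xderiv (xderiv f) x) - complex_of_real x * xderiv f x + (complex_of_real x)^2 * f x"

definition pn :: "nat \<Rightarrow> complex \<Rightarrow> real \<Rightarrow> complex" where
  "pn n \<alpha> x = (-1)^n * exp (complex_of_real x) * (complex_of_real x) powr (-\<alpha>) *
      (opA ^^ n) (\<lambda>t. exp (- complex_of_real t) * (complex_of_real t) powr \<alpha>) x"

end

theory Submission
  imports Defs "HOL-Computational_Algebra.Polynomial"
begin

(*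
  Write E_a(x) = e^(-x) x^a.  Conjugating the operator A by E_a turns it into a
  polynomial differential operator B_a:  A (E_a q) = E_a (B_a q)  on x > 0, where
  B_a q = -X^2 q'' + X (2X - 2a - 1) q' + ((2a+1) X - a^2) q.
  Hence p_n(x; a) = (-1)^n (B_a^n 1)(x), a genuine polynomial.
  The claimed identity says  L_a p_n(.;a) = (2a+1) p_n(.;a+1)  for the operator
  L_a q = -X q'' + (2X - 1 - 2a) q' + (1 + 2a) q.  This follows from the intertwining
  relation  L_a B_a = B_(a+1) L_a,  itself a consequence of the two polynomial identities
  X L_a = B_a + a^2  and  X B_(a+1) = B_a X  (cancel X), together with L_a 1 = 1 + 2a.

  The identity holds for every complex a.
*)

text \<open>The conjugate of the operator A by the weight e^(-x) x^a, acting on polynomials.\<close>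
definition opB :: "'a::{idom,ring_char_0} \<Rightarrow> 'a poly \<Rightarrow> 'a poly" where
  "opB a q = - ([:0,0,1:] * pderiv (pderiv q)) + [:0,1:] * [: -2*a-1, 2:] * pderiv q
             + [: -(a^2), 2*a+1:] * q"

definition opL :: "'a::{idom,ring_char_0} \<Rightarrow> 'a poly \<Rightarrow> 'a poly" where
  "opL a q = - ([:0,1:] * pderiv (pderiv q)) + [:-1-2*a, 2:] * pderiv q + [:1+2*a:] * q"

lemma opB_add: "opB a (p + q) = opB a p + opB a q"
  by (rule poly_ext) (simp add: opB_def pderiv_add algebra_simps)

lemma opB_smult: "opB a (smult c q) = smult c (opB a q)"
  by (rule poly_ext) (simp add: opB_def pderiv_smult algebra_simps)

lemma opL_smult: "opL a (smult c q) = smult c (opL a q)"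
  by (rule poly_ext) (simp add: opL_def pderiv_smult algebra_simps)

lemma X_opL: "[:0,1:] * opL a q = opB a q + smult (a^2) q"
  by (rule poly_ext) (simp add: opL_def opB_def algebra_simps power2_eq_square)

lemma X_opB: "[:0,1:] * opB (a+1) q = opB a ([:0,1:] * q)"
  by (rule poly_ext)
     (simp add: opB_def pderiv_add pderiv_mult pderiv_pCons algebra_simps power2_eq_square)

text \<open>The key intertwining relation L_a B_a = B_(a+1) L_a, obtained by cancelling X.\<close>
lemma opL_opB: "opL a (opB a q) = opB (a+1) (opL a q)"
proof -
  have "[:0,1:] * opL a (opB a q) = opB a (opB a q) + smult (a^2) (opB a q)"
    by (rule X_opL)
  also have "\<dots> = opB a (opB a q + smult (a^2) q)"
    by (simp add: opB_add opB_smult)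
  also have "\<dots> = opB a ([:0,1:] * opL a q)"
    by (simp only: X_opL)
  also have "\<dots> = [:0,1:] * opB (a+1) (opL a q)"
    by (rule X_opB[symmetric])
  finally show ?thesis
    by simp
qed

lemma opL_opB_iter: "opL a ((opB a ^^ n) 1) = smult (1+2*a) ((opB (a+1) ^^ n) 1)"
proof (induction n)
  case 0
  then show ?case
    by (simp add: opL_def)
next
  case (Suc n)
  then show ?case
    by (simp add: opL_opB opB_smult)
qed

lemma xderiv_eqI:
  assumes "\<forall>y>0. f y = g y" and "x > 0" and "(g has_vector_derivative D) (at x)"
  shows "xderiv f x = D"
proof -
  have "(f has_vector_derivative D) (at x)"
    by (rule has_vector_derivative_transform_within_open[OF assms(3), of "{0<..}"])
       (use assms(1,2) in auto)
  then show ?thesis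
    by (simp add: xderiv_def vector_derivative_at)
qed

lemma xderiv_poly:
  assumes "\<forall>y>0. f y = poly p (complex_of_real y)" and "x > 0"
  shows "xderiv f x = poly (pderiv p) (complex_of_real x)"
  using assms by (intro xderiv_eqI[of f]) (auto intro: has_vector_derivative_real_field poly_DERIV)

definition weighted :: "complex \<Rightarrow> complex poly \<Rightarrow> real \<Rightarrow> complex" where
  "weighted a q t = exp (- complex_of_real t) * complex_of_real t powr a * poly q (complex_of_real t)"

text \<open>The polynomial part of the derivative: (E_a q)' = E_(a-1) (a q + X q' - X q).\<close>
definition weighted_deriv :: "complex \<Rightarrow> complex poly \<Rightarrow> complex poly" where
  "weighted_deriv a q = smult a q + [:0,1:] * pderiv q - [:0,1:] * q"

lemma weighted_shift:
  assumes "x > 0"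
  shows "complex_of_real x * weighted (a-1) q x = weighted a q x"
  using assms powr_add[of "complex_of_real x" "a-1" 1] by (simp add: weighted_def)

lemma weighted_has_derivative:
  assumes "x > 0"
  shows "(weighted a q has_vector_derivative weighted (a-1) (weighted_deriv a q) x) (at x)"
proof -
  let ?z = "complex_of_real x"
  have nonpos: "?z \<notin> \<real>\<^sub>\<le>\<^sub>0"
    using assms by (simp add: complex_nonpos_Reals_iff)
  have exp_deriv: "((\<lambda>z. exp (- z)) has_field_derivative - exp (- ?z)) (at ?z)"
    using DERIV_chain'[OF DERIV_minus[OF DERIV_ident] DERIV_exp] by simp
  have "((\<lambda>z. exp (- z) * z powr a * poly q z) has_field_derivative
          - exp (- ?z) * ?z powr a * poly q ?z + exp (- ?z) * (a * ?z powr (a-1)) * poly q ?z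
          + exp (- ?z) * ?z powr a * poly (pderiv q) ?z) (at ?z)"
    by (rule DERIV_cong[OF DERIV_mult[OF DERIV_mult[OF exp_deriv
          has_field_derivative_powr[OF nonpos]] poly_DERIV]]) (simp add: algebra_simps)
  moreover have "?z powr a = ?z powr (a-1) * ?z"
    using assms powr_add[of ?z "a-1" 1] by simp
  ultimately have "((\<lambda>z. exp (- z) * z powr a * poly q z) has_field_derivative
          weighted (a-1) (weighted_deriv a q) x) (at ?z)"
    by (simp add: weighted_def weighted_deriv_def algebra_simps)
  then show ?thesis
    unfolding weighted_def[of a q, abs_def] by (rule has_vector_derivative_real_field)
qed

lemma xderiv_weighted:
  assumes "\<forall>y>0. f y = weighted a q y" and "x > 0"
  shows "xderiv f x = weighted (a-1) (weighted_deriv a q) x"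
  using assms weighted_has_derivative by (intro xderiv_eqI[of f]) auto

lemma opB_weighted_deriv:
  "opB a q = [:0,0,1:] * q - weighted_deriv (a-1) (weighted_deriv a q) - weighted_deriv a q"
  by (rule poly_ext)
     (simp add: opB_def weighted_deriv_def pderiv_add pderiv_diff pderiv_smult pderiv_mult
                pderiv_pCons algebra_simps power2_eq_square)

lemma opA_weighted:
  assumes "\<forall>y>0. f y = weighted a q y" and "x > 0"
  shows "opA f x = weighted a (opB a q) x"
proof -
  let ?z = "complex_of_real x" and ?D1 = "weighted_deriv a q"
  let ?D2 = "weighted_deriv (a-1) ?D1"
  have d1: "\<forall>y>0. xderiv f y = weighted (a-1) ?D1 y"
    using xderiv_weighted[OF assms(1)] by auto
  have "?z^2 * xderiv (xderiv f) x = ?z * (?z * weighted (a-1-1) ?D2 x)"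
    using xderiv_weighted[OF d1 assms(2)] by (simp add: power2_eq_square)
  also have "\<dots> = ?z * weighted (a-1) ?D2 x"
    using weighted_shift[OF assms(2), of "a-1"] by simp
  also have "\<dots> = weighted a ?D2 x"
    using weighted_shift[OF assms(2)] by simp
  finally have second: "?z^2 * xderiv (xderiv f) x = weighted a ?D2 x" .
  have first: "?z * xderiv f x = weighted a ?D1 x"
    using d1 assms(2) by (simp add: weighted_shift)
  show ?thesis
    unfolding opA_def second first assms(1)[rule_format, OF assms(2)] opB_weighted_deriv
    by (simp add: weighted_def algebra_simps power2_eq_square)
qed

lemma opA_iter_weighted: "\<forall>y>0. (opA ^^ n) (weighted a 1) y = weighted a ((opB a ^^ n) 1) y"
proof (induction n)
  case 0
  then show ?case
    by simp
next
  case (Suc n)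
  then show ?case
    using opA_weighted by simp
qed

lemma pn_eq_poly:
  assumes "x > 0"
  shows "pn n a x = poly (smult ((-1)^n) ((opB a ^^ n) 1)) (complex_of_real x)"
proof -
  have "(\<lambda>t. exp (- complex_of_real t) * complex_of_real t powr a) = weighted a 1"
    by (simp add: weighted_def fun_eq_iff)
  moreover have "complex_of_real x \<noteq> 0"
    using assms by simp
  ultimately show ?thesis
    unfolding pn_def using opA_iter_weighted assms
    by (simp add: weighted_def powr_minus exp_minus field_simps)
qed

theorem mainTheorem2:
  fixes \<alpha> :: complex and n :: nat and x :: real
  assumes "Re \<alpha> > -1/2" and "x > 0"
  shows "(2*\<alpha>+1) * pn n (\<alpha>+1) x =
           - complex_of_real x * xderiv (xderiv (pn n \<alpha>)) x
           + (2 * complex_of_real x - 1 - 2*\<alpha>) * xderiv (pn n \<alpha>) x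
           + (1 + 2*\<alpha>) * pn n \<alpha> x"
proof -
  define P where "P = smult ((-1)^n) ((opB \<alpha> ^^ n) 1)"
  have p0: "\<forall>y>0. pn n \<alpha> y = poly P (complex_of_real y)"
    using pn_eq_poly unfolding P_def by auto
  have p1: "\<forall>y>0. xderiv (pn n \<alpha>) y = poly (pderiv P) (complex_of_real y)"
    using xderiv_poly[OF p0] by auto
  have p2: "xderiv (xderiv (pn n \<alpha>)) x = poly (pderiv (pderiv P)) (complex_of_real x)"
    using xderiv_poly[OF p1 assms(2)] .
  have "opL \<alpha> P = smult (1+2*\<alpha>) (smult ((-1)^n) ((opB (\<alpha>+1) ^^ n) 1))"
    unfolding P_def by (simp add: opL_smult opL_opB_iter mult.commute)
  then have "poly (opL \<alpha> P) (complex_of_real x) = (1+2*\<alpha>) * pn n (\<alpha>+1) x"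
    using pn_eq_poly[OF assms(2)] by simp
  then show ?thesis
    unfolding p2 p1[rule_format, OF assms(2)] p0[rule_format, OF assms(2)]
    by (simp add: opL_def algebra_simps)
qed

end
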